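(* For any $\epsilon,\gamma>0$ and any graph $\mathcal{G}=(\mathcal{V},\mathcal{E})$ containing a perfect matching, with $V=|\mathcal{V}|$ and $E=|\mathcal{E}|$, there is an algorithm $\mathcal{A}$ that is $\epsilon$-differentially private on $\mathcal{G}$ that on input $w:\mathcal{E}\to\mathbb{R}$ releases, with probability at least $1-\gamma$, a perfect matching of $\mathcal{G}$ whose weight is at most $(V/\epsilon)\ln(E/\gamma)$ larger than the minimum weight of a perfect matching of $(\mathcal{G},w)$.
   Context: Private edge weight model (with real, possibly negative, weights): for a graph $\mathcal{G}=(\mathcal{V},\mathcal{E})$, a weight function is $w:\mathcal{E}\to\mathbb{R}$. Two weight functions $w,w'$ are neighboring if $\sum_{e\in\mathcal{E}}|w(e)-w'(e)|\le1$. A randomized algorithm $\mathcal{A}$ on weight functions is $\epsilon$-differentially private on $\mathcal{G}$ if for all neighboring $w,w'$ and all sets $S$ of outputs, $\Pr[\mathcal{A}(w)\in S]\le e^{\epsilon}\Pr[\mathcal{A}(w')\in S]$. The weight of a matching is the sum of its edge weights. *)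

theory Defs
  imports "HOL-Probability.Probability"
begin

definition simple_graph :: "'a set \<Rightarrow> 'a set set \<Rightarrow> bool" where
  "simple_graph Vs Es \<longleftrightarrow> finite Vs \<and>
     (\<forall>e\<in>Es. \<exists>u v. u \<noteq> v \<and> u \<in> Vs \<and> v \<in> Vs \<and> e = {u, v})"

definition perfect_matching :: "'a set \<Rightarrow> 'a set set \<Rightarrow> 'a set set \<Rightarrow> bool" where
  "perfect_matching Vs Es M \<longleftrightarrow> M \<subseteq> Es \<and>
     (\<forall>v\<in>Vs. \<exists>!e. e \<in> M \<and> v \<in> e)"

definition matching_weight :: "('a set \<Rightarrow> real) \<Rightarrow> 'a set set \<Rightarrow> real" where
  "matching_weight w M = (\<Sum>e\<in>M. w e)"

definition min_pm_weight :: "'a set \<Rightarrow> 'a set set \<Rightarrow> ('a set \<Rightarrow> real) \<Rightarrow> real" where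
  "min_pm_weight Vs Es w = Min (matching_weight w ` {M. perfect_matching Vs Es M})"

definition neighboring :: "'a set set \<Rightarrow> ('a set \<Rightarrow> real) \<Rightarrow> ('a set \<Rightarrow> real) \<Rightarrow> bool" where
  "neighboring Es w w' \<longleftrightarrow> (\<Sum>e\<in>Es. \<bar>w e - w' e\<bar>) \<le> 1"

definition diff_private :: "real \<Rightarrow> 'a set set \<Rightarrow> (('a set \<Rightarrow> real) \<Rightarrow> 'b pmf) \<Rightarrow> bool" where
  "diff_private \<epsilon> Es A \<longleftrightarrow>
     (\<forall>w w' S. neighboring Es w w' \<longrightarrow>
        measure_pmf.prob (A w) S \<le> exp \<epsilon> * measure_pmf.prob (A w') S)"

end

theory Submission
  imports Defs
begin

text \<open>The algorithm is the exponential mechanism: it samples a perfect matching M with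
  probability proportional to exp (-\<epsilon> w(M) / 2). Changing w to a neighbour moves every matching
  weight by at most 1, so each unnormalised probability and the normaliser change by a factor of
  at most exp (\<epsilon>/2), which gives \<epsilon>-privacy. A matching heavier than the optimum by more than t
  is at most exp (-\<epsilon> t / 2) times as likely as an optimal one, and there are at most
  E^(V/2) perfect matchings; for t = (V/\<epsilon>) ln (E/\<gamma>) the total probability of such
  matchings is at most (E^(V/2) - 1) (\<gamma>/E)^(V/2) \<le> \<gamma>.\<close>

definition gibbs_pmf :: "real \<Rightarrow> 'b set \<Rightarrow> ('b \<Rightarrow> real) \<Rightarrow> 'b pmf" where
  "gibbs_pmf a R c =
     embed_pmf (\<lambda>x. indicator R x * exp (- a * c x) / (\<Sum>y\<in>R. exp (- a * c y)))"

lemma gibbs_partition_pos: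
  fixes c :: "'b \<Rightarrow> real"
  assumes "finite R" "R \<noteq> {}"
  shows "0 < (\<Sum>y\<in>R. exp (- a * c y))"
  using assms by (intro sum_pos) auto

lemma pmf_gibbs_pmf:
  assumes "finite R" "R \<noteq> {}"
  shows "pmf (gibbs_pmf a R c) x = indicator R x * exp (- a * c x) / (\<Sum>y\<in>R. exp (- a * c y))"
proof -
  let ?Z = "\<Sum>y\<in>R. exp (- a * c y)"
  let ?f = "\<lambda>x. indicator R x * exp (- a * c x) / ?Z"
  have Z: "0 < ?Z" using gibbs_partition_pos[OF assms] .
  have nonneg: "\<And>x. 0 \<le> ?f x" using Z by simp
  have "(\<integral>\<^sup>+x. ennreal (?f x) \<partial>count_space UNIV) = (\<Sum>x\<in>R. ennreal (?f x))"
    using assms(1) by (intro nn_integral_count_space') auto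
  also have "\<dots> = ennreal (\<Sum>x\<in>R. exp (- a * c x) / ?Z)"
    using Z by (subst sum_ennreal) auto
  also have "\<dots> = 1" using Z by (simp add: sum_divide_distrib[symmetric])
  finally show ?thesis
    unfolding gibbs_pmf_def by (rule pmf_embed_pmf[OF nonneg])
qed

lemma set_gibbs_pmf:
  assumes "finite R" "R \<noteq> {}"
  shows "set_pmf (gibbs_pmf a R c) = R"
  using gibbs_partition_pos[OF assms, of a c]
  by (auto simp: set_pmf_eq pmf_gibbs_pmf[OF assms] indicator_def)

lemma measure_gibbs_pmf:
  assumes "finite R" "R \<noteq> {}"
  shows "measure_pmf.prob (gibbs_pmf a R c) S
           = (\<Sum>x\<in>S \<inter> R. exp (- a * c x)) / (\<Sum>y\<in>R. exp (- a * c y))"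
proof -
  have "measure_pmf.prob (gibbs_pmf a R c) S = measure_pmf.prob (gibbs_pmf a R c) (S \<inter> R)"
    using measure_Int_set_pmf[of "gibbs_pmf a R c" S] by (simp add: set_gibbs_pmf[OF assms])
  also have "\<dots> = (\<Sum>x\<in>S \<inter> R. pmf (gibbs_pmf a R c) x)"
    using assms(1) by (simp add: measure_measure_pmf_finite)
  finally show ?thesis
    by (simp add: pmf_gibbs_pmf[OF assms] sum_divide_distrib[symmetric])
qed

lemma exp_neg_mult_le_of_dist:
  fixes a u u' \<Delta> :: real
  assumes "0 \<le> a" "\<bar>u - u'\<bar> \<le> \<Delta>"
  shows "exp (- a * u) \<le> exp (a * \<Delta>) * exp (- a * u')"
proof -
  have "u' - u \<le> \<Delta>" using assms(2) by arith
  then have "a * (u' - u) \<le> a * \<Delta>" using assms(1) by (rule mult_left_mono)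
  then show ?thesis by (simp add: exp_add[symmetric] algebra_simps)
qed

lemma gibbs_pmf_prob_le:
  assumes "finite R" "R \<noteq> {}" "0 \<le> a" and dist: "\<And>x. x \<in> R \<Longrightarrow> \<bar>c x - c' x\<bar> \<le> \<Delta>"
  shows "measure_pmf.prob (gibbs_pmf a R c) S
           \<le> exp (2 * a * \<Delta>) * measure_pmf.prob (gibbs_pmf a R c') S"
proof -
  let ?Z = "\<Sum>y\<in>R. exp (- a * c y)" and ?Z' = "\<Sum>y\<in>R. exp (- a * c' y)"
  have Z: "0 < ?Z" and Z': "0 < ?Z'" using gibbs_partition_pos[OF assms(1,2)] by auto
  have "?Z' \<le> (\<Sum>y\<in>R. exp (a * \<Delta>) * exp (- a * c y))"
    using dist assms(3) by (intro sum_mono exp_neg_mult_le_of_dist) (auto simp: abs_minus_commute)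
  then have Z'_le: "?Z' \<le> exp (a * \<Delta>) * ?Z" by (simp add: sum_distrib_left)
  have "(\<Sum>x\<in>S \<inter> R. exp (- a * c x)) \<le> (\<Sum>x\<in>S \<inter> R. exp (a * \<Delta>) * exp (- a * c' x))"
    using dist assms(3) by (intro sum_mono exp_neg_mult_le_of_dist) auto
  then have num_le: "(\<Sum>x\<in>S \<inter> R. exp (- a * c x)) \<le> exp (a * \<Delta>) * (\<Sum>x\<in>S \<inter> R. exp (- a * c' x))"
    by (simp add: sum_distrib_left)
  have "measure_pmf.prob (gibbs_pmf a R c) S = (\<Sum>x\<in>S \<inter> R. exp (- a * c x)) / ?Z"
    by (rule measure_gibbs_pmf[OF assms(1,2)])
  also have "\<dots> \<le> exp (a * \<Delta>) * (\<Sum>x\<in>S \<inter> R. exp (- a * c' x)) / (?Z' / exp (a * \<Delta>))"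
    using num_le Z'_le Z Z' by (intro frac_le) (auto simp: divide_le_eq mult.commute sum_nonneg)
  also have "\<dots> = exp (2 * a * \<Delta>) * ((\<Sum>x\<in>S \<inter> R. exp (- a * c' x)) / ?Z')"
    by (simp add: field_simps exp_add[symmetric])
  also have "\<dots> = exp (2 * a * \<Delta>) * measure_pmf.prob (gibbs_pmf a R c') S"
    by (simp add: measure_gibbs_pmf[OF assms(1,2)])
  finally show ?thesis .
qed

lemma gibbs_pmf_prob_near_min:
  assumes "finite R" "R \<noteq> {}" "0 \<le> a" "0 \<le> t"
  shows "measure_pmf.prob (gibbs_pmf a R c) {x \<in> R. c x \<le> Min (c ` R) + t}
           \<ge> 1 - (real (card R) - 1) * exp (- a * t)"
proof -
  let ?p = "gibbs_pmf a R c" and ?m = "Min (c ` R)" and ?Z = "\<Sum>y\<in>R. exp (- a * c y)"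
  define B where "B = {x \<in> R. ?m + t < c x}"
  have "B \<subseteq> R" by (auto simp: B_def)
  have "?m \<in> c ` R" using assms(1,2) by (intro Min_in) auto
  then obtain x0 where x0: "x0 \<in> R" "c x0 = ?m" by auto
  have Z_ge: "exp (- a * ?m) \<le> ?Z"
    using member_le_sum[of x0 R "\<lambda>y. exp (- a * c y)"] x0 assms(1) by simp
  have "exp (- a * c x) \<le> exp (- a * (?m + t))" if "x \<in> B" for x
    using that assms(3) by (auto simp: B_def intro: mult_left_mono)
  then have "(\<Sum>x\<in>B. exp (- a * c x)) \<le> real (card B) * exp (- a * (?m + t))"
    using sum_mono[of B _ "\<lambda>_. exp (- a * (?m + t))"] by simp
  also have "\<dots> \<le> (real (card R) - 1) * exp (- a * (?m + t))"
  proof -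
    have "B \<subseteq> R - {x0}" using x0 assms(4) by (auto simp: B_def)
    then have "card B \<le> card R - 1" using assms(1) x0(1) card_mono[of "R - {x0}" B] by simp
    then show ?thesis using x0(1) assms(1) card_gt_0_iff[of R] by (auto simp: of_nat_diff)
  qed
  finally have "(\<Sum>x\<in>B. exp (- a * c x)) / ?Z \<le> (real (card R) - 1) * exp (- a * (?m + t)) / exp (- a * ?m)"
    using Z_ge x0(1) assms(1) card_gt_0_iff[of R]
    by (intro frac_le) (auto simp: sum_nonneg)
  also have "\<dots> = (real (card R) - 1) * exp (- a * t)"
    using exp_add[of "- a * ?m" "- a * t"] by (simp add: distrib_left)
  finally have bad: "measure_pmf.prob ?p B \<le> (real (card R) - 1) * exp (- a * t)"
    using measure_gibbs_pmf[OF assms(1,2), of a c B] \<open>B \<subseteq> R\<close> by (simp add: Int_absorb2)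
  have "measure_pmf.prob ?p R = 1"
    using measure_gibbs_pmf[OF assms(1,2), of a c R] gibbs_partition_pos[OF assms(1,2), of a c] by simp
  moreover have "{x \<in> R. c x \<le> ?m + t} = R - B" by (auto simp: B_def)
  ultimately have "measure_pmf.prob ?p {x \<in> R. c x \<le> ?m + t} = 1 - measure_pmf.prob ?p B"
    using measure_pmf.finite_measure_Diff[of R ?p B] \<open>B \<subseteq> R\<close> by simp
  with bad show ?thesis by simp
qed

lemma finite_edges_of_simple_graph:
  assumes "simple_graph Vs Es"
  shows "finite Es"
proof -
  have "Es \<subseteq> Pow Vs" and "finite Vs" using assms unfolding simple_graph_def by auto
  then show ?thesis by (meson finite_Pow_iff finite_subset)
qed

lemma finite_perfect_matchings:
  assumes "simple_graph Vs Es"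
  shows "finite {M. perfect_matching Vs Es M}"
proof -
  have "{M. perfect_matching Vs Es M} \<subseteq> Pow Es" unfolding perfect_matching_def by auto
  then show ?thesis using finite_edges_of_simple_graph[OF assms] by (meson finite_Pow_iff finite_subset)
qed

lemma perfect_matching_disjoint:
  assumes "perfect_matching Vs Es M" "\<And>e. e \<in> M \<Longrightarrow> e \<subseteq> Vs"
  shows "pairwise disjnt M"
proof (rule pairwiseI)
  fix e e' assume "e \<in> M" "e' \<in> M" "e \<noteq> e'"
  moreover have "\<exists>!e. e \<in> M \<and> v \<in> e" if "v \<in> e" "e \<in> M" for v e
    using assms that unfolding perfect_matching_def by blast
  ultimately show "disjnt e e'" unfolding disjnt_def by blast
qed

lemma card_vertices_perfect_matching:
  assumes sg: "simple_graph Vs Es" and pm: "perfect_matching Vs Es M"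
  shows "card Vs = 2 * card M"
proof -
  have edge: "card e = 2" "e \<subseteq> Vs" if "e \<in> M" for e
  proof -
    have "e \<in> Es" using that pm unfolding perfect_matching_def by blast
    then obtain u v where "u \<noteq> v" "u \<in> Vs" "v \<in> Vs" "e = {u, v}"
      using sg unfolding simple_graph_def by blast
    then show "card e = 2" "e \<subseteq> Vs" by auto
  qed
  have "Vs \<subseteq> \<Union>M"
  proof
    fix v assume "v \<in> Vs"
    then obtain e where "e \<in> M" "v \<in> e" using pm unfolding perfect_matching_def by blast
    then show "v \<in> \<Union>M" by blast
  qed
  with edge(2) have "\<Union>M = Vs" by blast
  moreover have "finite e" if "e \<in> M" for e by (rule card_ge_0_finite) (simp add: edge(1)[OF that])
  ultimately have "card Vs = (\<Sum>e\<in>M. card e)"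
    using card_Union_disjoint[OF perfect_matching_disjoint[OF pm edge(2)]] by simp
  then show ?thesis using edge(1) by simp
qed

lemma card_perfect_matchings_le:
  assumes sg: "simple_graph Vs Es"
  shows "card {M. perfect_matching Vs Es M} \<le> card Es ^ (card Vs div 2)"
proof -
  let ?k = "card Vs div 2"
  have "{M. perfect_matching Vs Es M} \<subseteq> {B. B \<subseteq> Es \<and> card B = ?k}"
  proof
    fix M assume "M \<in> {M. perfect_matching Vs Es M}"
    then have pm: "perfect_matching Vs Es M" by simp
    then have "M \<subseteq> Es" unfolding perfect_matching_def by simp
    moreover have "card M = ?k" using card_vertices_perfect_matching[OF sg pm] by simp
    ultimately show "M \<in> {B. B \<subseteq> Es \<and> card B = ?k}" by simp
  qed
  then have "card {M. perfect_matching Vs Es M} \<le> card {B. B \<subseteq> Es \<and> card B = ?k}"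
    using finite_edges_of_simple_graph[OF sg] by (intro card_mono) auto
  also have "\<dots> = card Es choose ?k" using finite_edges_of_simple_graph[OF sg] by (rule n_subsets)
  also have "\<dots> \<le> card Es ^ ?k"
    by (cases "?k \<le> card Es") (auto simp: binomial_le_pow binomial_eq_0)
  finally show ?thesis .
qed

lemma matching_weight_dist_le_if_neighboring:
  assumes "finite Es" "M \<subseteq> Es" "neighboring Es w w'"
  shows "\<bar>matching_weight w M - matching_weight w' M\<bar> \<le> 1"
proof -
  have "\<bar>matching_weight w M - matching_weight w' M\<bar> = \<bar>\<Sum>e\<in>M. w e - w' e\<bar>"
    unfolding matching_weight_def by (simp add: sum_subtractf)
  also have "\<dots> \<le> (\<Sum>e\<in>M. \<bar>w e - w' e\<bar>)" by (rule sum_abs)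
  also have "\<dots> \<le> (\<Sum>e\<in>Es. \<bar>w e - w' e\<bar>)" using assms(1,2) by (intro sum_mono2) auto
  also have "\<dots> \<le> 1" using assms(3) unfolding neighboring_def .
  finally show ?thesis .
qed

definition pm_mechanism :: "real \<Rightarrow> 'a set \<Rightarrow> 'a set set \<Rightarrow> ('a set \<Rightarrow> real) \<Rightarrow> 'a set set pmf" where
  "pm_mechanism \<epsilon> Vs Es w = gibbs_pmf (\<epsilon> / 2) {M. perfect_matching Vs Es M} (matching_weight w)"

lemma diff_private_pm_mechanism:
  assumes "0 \<le> \<epsilon>" "simple_graph Vs Es" "\<exists>M. perfect_matching Vs Es M"
  shows "diff_private \<epsilon> Es (pm_mechanism \<epsilon> Vs Es)"
proof -
  let ?R = "{M. perfect_matching Vs Es M}"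
  have "\<bar>matching_weight w M - matching_weight w' M\<bar> \<le> 1"
    if "neighboring Es w w'" "M \<in> ?R" for w w' M
    using that finite_edges_of_simple_graph[OF assms(2)]
    by (intro matching_weight_dist_le_if_neighboring) (auto simp: perfect_matching_def)
  then show ?thesis
    unfolding diff_private_def pm_mechanism_def
    using gibbs_pmf_prob_le[OF finite_perfect_matchings[OF assms(2)] _ _, of "\<epsilon> / 2" _ _ 1] assms(1,3)
    by auto
qed

lemma nat_minus_one_mult_exp_neg_ln_le:
  fixes \<gamma> :: real and N E k :: nat
  assumes "0 < \<gamma>" "\<gamma> \<le> 1" "1 \<le> N" "N \<le> E ^ k"
  shows "(real N - 1) * exp (- (real k * ln (real E / \<gamma>))) \<le> \<gamma>"
proof (cases "k = 0")
  case True then show ?thesis using assms by simp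
next
  case False
  then have "0 < E" using assms(3,4) by (cases E) (auto simp: power_0_left)
  then have "exp (- (real k * ln (real E / \<gamma>))) = (\<gamma> / real E) ^ k"
    using assms(1) by (simp add: exp_minus exp_of_nat_mult power_divide)
  moreover have "real N \<le> real (E ^ k)" using assms(4) by (rule of_nat_mono)
  then have "real N - 1 \<le> real E ^ k" unfolding of_nat_power by linarith
  ultimately have "(real N - 1) * exp (- (real k * ln (real E / \<gamma>))) \<le> real E ^ k * (\<gamma> / real E) ^ k"
    using assms(1) by (simp add: mult_right_mono)
  also have "\<dots> = \<gamma> ^ k" using \<open>0 < E\<close> by (simp add: power_divide)
  also have "\<dots> \<le> \<gamma>" using power_decreasing[of 1 k \<gamma>] assms(1,2) False by simp
  finally show ?thesis .
qed

lemma pm_mechanism_near_optimal: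
  assumes "0 < \<epsilon>" "0 < \<gamma>" "simple_graph Vs Es" "\<exists>M. perfect_matching Vs Es M"
  defines "t \<equiv> (real (card Vs) / \<epsilon>) * ln (real (card Es) / \<gamma>)"
  shows "measure_pmf.prob (pm_mechanism \<epsilon> Vs Es w)
           {M. perfect_matching Vs Es M \<and> matching_weight w M \<le> min_pm_weight Vs Es w + t}
         \<ge> 1 - \<gamma>"
proof (cases "\<gamma> < 1")
  case False
  then show ?thesis by (smt (verit) measure_nonneg)
next
  case True
  let ?R = "{M. perfect_matching Vs Es M}"
  obtain M0 where "perfect_matching Vs Es M0" using assms(4) by blast
  define k where "k = card M0"
  have V: "card Vs = 2 * k"
    unfolding k_def by (rule card_vertices_perfect_matching) fact+
  have R: "finite ?R" "?R \<noteq> {}"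
    using finite_perfect_matchings[OF assms(3)] \<open>perfect_matching Vs Es M0\<close> by auto
  have N: "1 \<le> card ?R" "card ?R \<le> card Es ^ k"
    using R card_perfect_matchings_le[OF assms(3)] by (auto simp: V Suc_le_eq card_gt_0_iff)
  have "0 \<le> t"
  proof (cases "k = 0")
    case False
    then have "1 \<le> card Es" using N by (cases "card Es") (auto simp: power_0_left)
    then have "1 \<le> real (card Es) / \<gamma>" using True assms(2) by (simp add: le_divide_eq)
    then show ?thesis using assms(1) by (simp add: t_def)
  qed (simp add: t_def V)
  have "\<epsilon> / 2 * t = real k * ln (real (card Es) / \<gamma>)"
    using assms(1) by (simp add: t_def V)
  moreover have "{M. perfect_matching Vs Es M \<and> matching_weight w M \<le> min_pm_weight Vs Es w + t}
      = {M \<in> ?R. matching_weight w M \<le> Min (matching_weight w ` ?R) + t}"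
    unfolding min_pm_weight_def by auto
  ultimately show ?thesis
    using gibbs_pmf_prob_near_min[OF R _ \<open>0 \<le> t\<close>, of "\<epsilon> / 2" "matching_weight w"]
      nat_minus_one_mult_exp_neg_ln_le[OF assms(2) _ N] assms(1) True
    unfolding pm_mechanism_def by simp
qed

theorem theoremB6:
  fixes Vs :: "'a set" and Es :: "'a set set" and \<epsilon> \<gamma> :: real
  assumes "\<epsilon> > 0" and "\<gamma> > 0"
    and "simple_graph Vs Es"
    and "\<exists>M. perfect_matching Vs Es M"
  shows "\<exists>A :: ('a set \<Rightarrow> real) \<Rightarrow> 'a set set pmf.
           diff_private \<epsilon> Es A \<and>
           (\<forall>w. measure_pmf.prob (A w)
                  {M. perfect_matching Vs Es M \<and>
                      matching_weight w M \<le> min_pm_weight Vs Es w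
                        + (real (card Vs) / \<epsilon>) * ln (real (card Es) / \<gamma>)}
                \<ge> 1 - \<gamma>)"
  using diff_private_pm_mechanism[OF _ assms(3,4)] pm_mechanism_near_optimal[OF assms] assms(1)
  by (intro exI[of _ "pm_mechanism \<epsilon> Vs Es"]) auto

end
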